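(* Let $X$ be a nonreflexive real Banach space, and consider $X\oplus\mathbb R$ equipped with the maximum norm $\|(x,t)\|=\max\{\|x\|,|t|\}$, identifying $x\in X$ with $(x,0)\in X\oplus\mathbb R$. Then there exists a nonempty bounded convex set $C\subset X\oplus\mathbb R$ such that (a) $\varphi(x):=\operatorname{dist}(x,C)>0$ for every $x\in X$ (distance taken in $X\oplus\mathbb R$), and (b) for each $\varepsilon>0$ there is a set $M_\varepsilon\subset X$ with $\operatorname{diam} M_\varepsilon<\varepsilon$ and $\inf \varphi(M_\varepsilon)=0$. *)

theory Defs
  imports "HOL-Analysis.Analysis"
begin

definition reflexive_space :: "'a::real_normed_vector itself \<Rightarrow> bool" where
  "reflexive_space _ \<longleftrightarrow>
     (\<forall>\<Phi> :: ('a \<Rightarrow>\<^sub>L real) \<Rightarrow>\<^sub>L real. \<exists>x::'a. \<forall>f. blinfun_apply \<Phi> f = blinfun_apply f x)"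

definition maxnorm :: "'a::real_normed_vector \<times> real \<Rightarrow> real" where
  "maxnorm p = max (norm (fst p)) \<bar>snd p\<bar>"

definition maxdist :: "'a::real_normed_vector \<times> real \<Rightarrow> ('a \<times> real) set \<Rightarrow> real" where
  "maxdist p C = Inf ((\<lambda>c. maxnorm (p - c)) ` C)"

definition maxbounded :: "('a::real_normed_vector \<times> real) set \<Rightarrow> bool" where
  "maxbounded C \<longleftrightarrow> (\<exists>B. \<forall>c\<in>C. maxnorm c \<le> B)"

end

theory Submission
  imports Defs
begin

text \<open>By James' characterisation of reflexivity, a nonreflexive \<open>X\<close> carries \<open>\<theta> > 0\<close>, bounded
  vectors \<open>x k\<close> and functionals \<open>f n\<close> of norm at most one with \<open>f n (x k) = \<theta>\<close> for \<open>n \<le> k\<close>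
  and \<open>0\<close> otherwise. They are built inductively from a functional \<open>\<Phi>\<close> on \<open>X*\<close> at positive
  distance from all evaluations: Hahn--Banach yields the next functional on the annihilator of
  the vectors so far, and Helly's theorem the next vector.

  With \<open>w j = 1 / (j + 1)\<close>, let \<open>C\<close> be the convex hull of the points
  \<open>((1 - w j) x j + w j x k, w k)\<close> for \<open>j \<le> k\<close>. For fixed \<open>j\<close>, the first components form a
  set of diameter at most \<open>2 R w j\<close> whose points lie within \<open>w k\<close> of \<open>C\<close>; this is (b). On the
  other hand, every point of \<open>C\<close> is annihilated by \<open>f N\<close> for all large \<open>N\<close>, while the linear
  inequality \<open>\<theta> \<le> f n v + (n + 1) f N v + (n + 1) \<theta> N t\<close> holds on \<open>C\<close>; together they keep
  every \<open>(y, 0)\<close> at positive distance from \<open>C\<close>, which is (a).\<close>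

section \<open>Hahn--Banach theorem\<close>

definition sublinear :: "('a::real_vector \<Rightarrow> real) \<Rightarrow> bool" where
  "sublinear p \<longleftrightarrow> (\<forall>x y. p (x + y) \<le> p x + p y) \<and> (\<forall>c x. 0 \<le> c \<longrightarrow> p (c *\<^sub>R x) = c * p x)"

text \<open>Linear functionals on subspaces are represented by their graphs: single-valued subspaces
  of \<open>'a \<times> real\<close>.\<close>

definition linear_graph_below :: "('a::real_vector \<Rightarrow> real) \<Rightarrow> ('a \<times> real) set \<Rightarrow> bool" where
  "linear_graph_below p H \<longleftrightarrow> subspace H \<and> single_valued H \<and> (\<forall>x a. (x, a) \<in> H \<longrightarrow> a \<le> p x)"

definition graph_extend :: "('a::real_vector \<times> real) set \<Rightarrow> 'a \<Rightarrow> real \<Rightarrow> ('a \<times> real) set" where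
  "graph_extend H z c = {(x + t *\<^sub>R z, a + t * c) | x a t. (x, a) \<in> H}"

lemma subspace_pair_add: "subspace H \<Longrightarrow> (x, a) \<in> H \<Longrightarrow> (y, b) \<in> H \<Longrightarrow> (x + y, a + b) \<in> H"
  using subspace_add[of H "(x, a)" "(y, b)"] by simp

lemma subspace_pair_scale: "subspace H \<Longrightarrow> (x, a) \<in> H \<Longrightarrow> (c *\<^sub>R x, c * a) \<in> H"
  using subspace_mul[of H "(x, a)" c] by simp

lemma subspace_pair_zero: "subspace H \<Longrightarrow> (0, 0) \<in> H"
  using subspace_0[of H] by (simp add: zero_prod_def)

lemma subspace_graph_extend:
  assumes "subspace H"
  shows "subspace (graph_extend H z c)"
  unfolding subspace_def
proof (intro conjI ballI allI)
  show "0 \<in> graph_extend H z c"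
    unfolding graph_extend_def using subspace_pair_zero[OF assms]
    by (auto simp: zero_prod_def intro!: exI[of _ 0])
next
  fix u v assume "u \<in> graph_extend H z c" "v \<in> graph_extend H z c"
  then obtain x a t y b s where "u = (x + t *\<^sub>R z, a + t * c)" "(x, a) \<in> H"
    and "v = (y + s *\<^sub>R z, b + s * c)" "(y, b) \<in> H"
    unfolding graph_extend_def by blast
  then show "u + v \<in> graph_extend H z c"
    unfolding graph_extend_def using subspace_pair_add[OF assms]
    by (intro CollectI exI[of _ "x + y"] exI[of _ "a + b"] exI[of _ "t + s"])
       (simp add: algebra_simps scaleR_add_left)
next
  fix r :: real and u assume "u \<in> graph_extend H z c"
  then obtain x a t where "u = (x + t *\<^sub>R z, a + t * c)" "(x, a) \<in> H"
    unfolding graph_extend_def by blast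
  then show "r *\<^sub>R u \<in> graph_extend H z c"
    unfolding graph_extend_def using subspace_pair_scale[OF assms]
    by (intro CollectI exI[of _ "r *\<^sub>R x"] exI[of _ "r * a"] exI[of _ "r * t"])
       (simp add: algebra_simps scaleR_add_right)
qed

lemma subset_graph_extend: "H \<subseteq> graph_extend H z c"
  unfolding graph_extend_def by (force intro: exI[of _ 0])

lemma point_in_graph_extend: "subspace H \<Longrightarrow> (z, c) \<in> graph_extend H z c"
  unfolding graph_extend_def using subspace_pair_zero
  by (intro CollectI exI[of _ 0] exI[of _ 0] exI[of _ 1]) auto

lemma single_valued_graph_extend:
  assumes H: "subspace H" "single_valued H" and z: "z \<notin> fst ` H"
  shows "single_valued (graph_extend H z c)"
proof (rule single_valuedI)
  fix w a1 a2 assume "(w, a1) \<in> graph_extend H z c" "(w, a2) \<in> graph_extend H z c"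
  then obtain x a t y b s where 1: "w = x + t *\<^sub>R z" "a1 = a + t * c" "(x, a) \<in> H"
    and 2: "w = y + s *\<^sub>R z" "a2 = b + s * c" "(y, b) \<in> H"
    unfolding graph_extend_def by blast
  show "a1 = a2"
  proof (cases "t = s")
    case True
    then show ?thesis using 1 2 single_valuedD[OF H(2)] by auto
  next
    case False
    have "(x - y, a - b) \<in> H"
      using subspace_pair_add[OF H(1) 1(3) subspace_pair_scale[OF H(1) 2(3), of "-1"]] by simp
    from subspace_pair_scale[OF H(1) this, of "1 / (s - t)"]
    have "((1 / (s - t)) *\<^sub>R (x - y), (1 / (s - t)) * (a - b)) \<in> H" .
    moreover have "(1 / (s - t)) *\<^sub>R (x - y) = z"
    proof -
      have "x - y = (s - t) *\<^sub>R z" using 1(1) 2(1) by (simp add: algebra_simps)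
      then show ?thesis using False by simp
    qed
    ultimately show ?thesis using z by force
  qed
qed

lemma graph_extend_below:
  assumes p: "sublinear p" and H: "subspace H" "\<And>x a. (x, a) \<in> H \<Longrightarrow> a \<le> p x"
    and lower: "\<And>x a. (x, a) \<in> H \<Longrightarrow> a - p (x - z) \<le> c"
    and upper: "\<And>x a. (x, a) \<in> H \<Longrightarrow> c \<le> p (x + z) - a"
    and "(w, b) \<in> graph_extend H z c"
  shows "b \<le> p w"
proof -
  have pscale: "\<And>c x. 0 \<le> c \<Longrightarrow> p (c *\<^sub>R x) = c * p x"
    using p unfolding sublinear_def by auto
  obtain x a t where w: "w = x + t *\<^sub>R z" "b = a + t * c" "(x, a) \<in> H"
    using assms(6) unfolding graph_extend_def by blast
  consider "t = 0" | "t > 0" | "t < 0" by linarith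
  then show ?thesis
  proof cases
    case 1
    then show ?thesis using w H(2) by simp
  next
    case 2
    have "c \<le> p ((1 / t) *\<^sub>R x + z) - a / t"
      using upper[OF subspace_pair_scale[OF H(1) w(3), of "1 / t"]] by simp
    also have "(1 / t) *\<^sub>R x + z = (1 / t) *\<^sub>R w"
      using 2 w(1) by (simp add: algebra_simps)
    finally have "c \<le> (p w - a) / t" using 2 pscale by (simp add: diff_divide_distrib)
    then show ?thesis using 2 w(2) by (simp add: field_simps)
  next
    case 3
    define s where "s = - t"
    have s: "s > 0" "x = w + s *\<^sub>R z" "b = a - s * c"
      using 3 w unfolding s_def by auto
    have "a / s - p ((1 / s) *\<^sub>R x - z) \<le> c"
      using lower[OF subspace_pair_scale[OF H(1) w(3), of "1 / s"]] by simp
    also have "(1 / s) *\<^sub>R x - z = (1 / s) *\<^sub>R w"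
      using s(1) unfolding s(2) by (simp add: scaleR_add_right)
    finally have "(a - p w) / s \<le> c" using s pscale by (simp add: diff_divide_distrib)
    then show ?thesis using s by (simp add: field_simps)
  qed
qed

lemma linear_graph_below_extend:
  assumes p: "sublinear p" and H: "linear_graph_below p H" and z: "z \<notin> fst ` H"
  shows "\<exists>H'. linear_graph_below p H' \<and> H \<subset> H'"
proof -
  have sH: "subspace H" and svH: "single_valued H" and below: "\<And>x a. (x, a) \<in> H \<Longrightarrow> a \<le> p x"
    using H unfolding linear_graph_below_def by auto
  have gap: "a - p (x - z) \<le> p (y + z) - b" if "(x, a) \<in> H" "(y, b) \<in> H" for x a y b
  proof -
    have "a + b \<le> p ((x - z) + (y + z))"
      using below[OF subspace_pair_add[OF sH that]] by simp
    also have "\<dots> \<le> p (x - z) + p (y + z)"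
      using p unfolding sublinear_def by blast
    finally show ?thesis by simp
  qed
  define A where "A = {a - p (x - z) | x a. (x, a) \<in> H}"
  have "A \<noteq> {}" unfolding A_def using subspace_pair_zero[OF sH] by blast
  moreover have "bdd_above A"
    unfolding A_def bdd_above_def using gap[OF _ subspace_pair_zero[OF sH]] by fastforce
  ultimately have lower: "\<And>x a. (x, a) \<in> H \<Longrightarrow> a - p (x - z) \<le> Sup A"
    and upper: "\<And>y b. (y, b) \<in> H \<Longrightarrow> Sup A \<le> p (y + z) - b"
    using gap by (auto intro!: cSup_upper cSup_least simp: A_def)
  define H' where "H' = graph_extend H z (Sup A)"
  have "linear_graph_below p H'"
    unfolding linear_graph_below_def H'_def
    using subspace_graph_extend[OF sH] single_valued_graph_extend[OF sH svH z]
      graph_extend_below[OF p sH below lower upper] by blast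
  moreover have "H \<subset> H'"
  proof -
    have "(z, Sup A) \<in> H'" "(z, Sup A) \<notin> H"
      using point_in_graph_extend[OF sH] z unfolding H'_def by (auto simp: image_iff)
    then show ?thesis using subset_graph_extend unfolding H'_def by blast
  qed
  ultimately show ?thesis by blast
qed

lemma linear_graph_below_Union_chain:
  assumes C: "C \<in> chains {H. linear_graph_below p H \<and> H0 \<subseteq> H}" "C \<noteq> {}"
  shows "linear_graph_below p (\<Union>C) \<and> H0 \<subseteq> \<Union>C"
proof -
  have CH: "\<And>H. H \<in> C \<Longrightarrow> linear_graph_below p H \<and> H0 \<subseteq> H"
    using C(1) unfolding chains_def by blast
  have common: "\<exists>H\<in>C. u \<in> H \<and> v \<in> H" if "u \<in> \<Union>C" "v \<in> \<Union>C" for u v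
    using that chainsD[OF C(1)] by blast
  have "subspace (\<Union>C)"
    unfolding subspace_def
  proof (intro conjI ballI allI)
    show "0 \<in> \<Union>C"
      using C(2) CH subspace_0 unfolding linear_graph_below_def by blast
  next
    fix u v assume "u \<in> \<Union>C" "v \<in> \<Union>C"
    then show "u + v \<in> \<Union>C"
      using common CH subspace_add unfolding linear_graph_below_def by blast
  next
    fix r :: real and u assume "u \<in> \<Union>C"
    then show "r *\<^sub>R u \<in> \<Union>C"
      using CH subspace_mul unfolding linear_graph_below_def by blast
  qed
  moreover have "single_valued (\<Union>C)"
  proof (rule single_valuedI)
    fix x a b assume "(x, a) \<in> \<Union>C" "(x, b) \<in> \<Union>C"
    then show "a = b"
      using common CH single_valuedD unfolding linear_graph_below_def by metis
  qed
  moreover have "a \<le> p x" if "(x, a) \<in> \<Union>C" for x a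
    using that CH unfolding linear_graph_below_def by blast
  moreover have "H0 \<subseteq> \<Union>C"
    using C(2) CH by blast
  ultimately show ?thesis
    unfolding linear_graph_below_def by blast
qed

lemma linear_graph_below_chain_bounded:
  assumes "linear_graph_below p H0"
  shows "\<forall>C\<in>chains {H. linear_graph_below p H \<and> H0 \<subseteq> H}.
    \<exists>U\<in>{H. linear_graph_below p H \<and> H0 \<subseteq> H}. \<forall>H\<in>C. H \<subseteq> U"
proof
  fix C assume C: "C \<in> chains {H. linear_graph_below p H \<and> H0 \<subseteq> H}"
  show "\<exists>U\<in>{H. linear_graph_below p H \<and> H0 \<subseteq> H}. \<forall>H\<in>C. H \<subseteq> U"
  proof (cases "C = {}")
    case True
    then show ?thesis using assms by blast
  next
    case False
    then show ?thesis using linear_graph_below_Union_chain[OF C] by blast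
  qed
qed

theorem Hahn_Banach_graph:
  assumes p: "sublinear p" and H0: "linear_graph_below p H0"
  shows "\<exists>G. linear G \<and> (\<forall>x a. (x, a) \<in> H0 \<longrightarrow> G x = a) \<and> (\<forall>x. G x \<le> p x)"
proof -
  define \<F> where "\<F> = {H. linear_graph_below p H \<and> H0 \<subseteq> H}"
  obtain M where M: "M \<in> \<F>" and maximal: "\<forall>H\<in>\<F>. M \<subseteq> H \<longrightarrow> H = M"
    using Zorn_Lemma2[OF linear_graph_below_chain_bounded[OF H0]] unfolding \<F>_def ..
  have M_below: "linear_graph_below p M" and H0M: "H0 \<subseteq> M"
    using M unfolding \<F>_def by simp_all
  then have sM: "subspace M" and svM: "single_valued M" and below: "\<And>x a. (x, a) \<in> M \<Longrightarrow> a \<le> p x"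
    unfolding linear_graph_below_def by simp_all
  have total: "x \<in> fst ` M" for x
  proof (rule ccontr)
    assume "x \<notin> fst ` M"
    from linear_graph_below_extend[OF p M_below this]
    obtain H where "linear_graph_below p H" "M \<subset> H" by blast
    moreover from this have "H \<in> \<F>" using H0M unfolding \<F>_def by blast
    ultimately show False using maximal by blast
  qed
  define G where "G x = (THE a. (x, a) \<in> M)" for x
  have G_eq: "G x = a" if "(x, a) \<in> M" for x a
    unfolding G_def using that by (intro the_equality) (auto dest: single_valuedD[OF svM])
  have G_in: "(x, G x) \<in> M" for x
  proof -
    obtain a where "(x, a) \<in> M" using total[of x] by auto
    then show ?thesis using G_eq by simp
  qed
  have "linear G"
  proof (rule linearI)
    show "G (x + y) = G x + G y" for x y
      using G_eq[OF subspace_pair_add[OF sM G_in G_in]] .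
    show "G (r *\<^sub>R x) = r *\<^sub>R G x" for r x
      using G_eq[OF subspace_pair_scale[OF sM G_in]] by simp
  qed
  then show ?thesis using G_eq H0M G_in below by blast
qed

lemma sublinear_scaled_norm: "0 \<le> c \<Longrightarrow> sublinear (\<lambda>x. c * norm x)"
  unfolding sublinear_def
  by (auto simp: norm_triangle_ineq mult_left_mono distrib_left[symmetric])

theorem Hahn_Banach_norm:
  fixes H0 :: "('a::real_normed_vector \<times> real) set"
  assumes c: "0 \<le> c" and H0: "subspace H0" "single_valued H0"
    and below: "\<And>x a. (x, a) \<in> H0 \<Longrightarrow> a \<le> c * norm x"
  shows "\<exists>G::'a \<Rightarrow>\<^sub>L real. (\<forall>x a. (x, a) \<in> H0 \<longrightarrow> blinfun_apply G x = a) \<and> norm G \<le> c"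
proof -
  obtain G where G: "linear G" "\<forall>x a. (x, a) \<in> H0 \<longrightarrow> G x = a" "\<forall>x. G x \<le> c * norm x"
    using Hahn_Banach_graph[OF sublinear_scaled_norm[OF c]] H0 below
    unfolding linear_graph_below_def by blast
  have G_abs: "norm (G x) \<le> c * norm x" for x
    using G(3)[rule_format, of x] G(3)[rule_format, of "- x"] linear_neg[OF G(1)] by auto
  have bl: "bounded_linear G"
    using G(1) G_abs by (intro bounded_linear_intro[where K = c])
      (auto simp: linear_add linear_scale mult.commute)
  show ?thesis
  proof (intro exI conjI)
    show "\<forall>x a. (x, a) \<in> H0 \<longrightarrow> blinfun_apply (Blinfun G) x = a"
      using G(2) bounded_linear_Blinfun_apply[OF bl] by simp
    show "norm (Blinfun G) \<le> c"
      using G_abs by (intro norm_blinfun_bound[OF c]) (simp add: bounded_linear_Blinfun_apply[OF bl])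
  qed
qed

lemma subspace_Times_zero: "subspace Z \<Longrightarrow> subspace (Z \<times> {0 :: real})"
  unfolding subspace_def by (auto simp: zero_prod_def)

theorem exists_functional_separating_subspace:
  fixes x0 :: "'a::real_normed_vector"
  assumes Z: "subspace Z" and r: "0 < r" and far: "\<And>z. z \<in> Z \<Longrightarrow> r \<le> norm (x0 - z)"
  shows "\<exists>G::'a \<Rightarrow>\<^sub>L real. norm G \<le> 1 \<and> (\<forall>z\<in>Z. blinfun_apply G z = 0) \<and> blinfun_apply G x0 = r"
proof -
  define H0 where "H0 = graph_extend (Z \<times> {0::real}) x0 r"
  have sZ0: "subspace (Z \<times> {0::real})" using subspace_Times_zero[OF Z] .
  have "x0 \<notin> Z" using far[of x0] r by auto
  then have sv: "single_valued H0"
    unfolding H0_def by (intro single_valued_graph_extend[OF sZ0]) (auto simp: single_valued_def)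
  have below: "a \<le> 1 * norm x" if "(x, a) \<in> H0" for x a
  proof (rule graph_extend_below[OF sublinear_scaled_norm sZ0 _ _ _ that[unfolded H0_def]])
    fix z and a :: real assume "(z, a) \<in> Z \<times> {0}"
    then have z: "z \<in> Z" "a = 0" by auto
    show "a \<le> 1 * norm z" using z by simp
    show "a - 1 * norm (z - x0) \<le> r" using z r norm_ge_zero[of "z - x0"] by linarith
    have "r \<le> norm (x0 - (- z))" using far subspace_neg[OF Z z(1)] by blast
    then show "r \<le> 1 * norm (z + x0) - a" using z by (simp add: add.commute)
  qed simp
  obtain G :: "'a \<Rightarrow>\<^sub>L real" where G: "\<forall>x a. (x, a) \<in> H0 \<longrightarrow> blinfun_apply G x = a" "norm G \<le> 1"
    using Hahn_Banach_norm[of 1 H0] subspace_graph_extend[OF sZ0] sv below unfolding H0_def by auto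
  have "\<forall>z\<in>Z. blinfun_apply G z = 0"
    using G(1) subset_graph_extend[of "Z \<times> {0}" x0 r] unfolding H0_def by auto
  moreover have "blinfun_apply G x0 = r"
    using G(1) point_in_graph_extend[OF sZ0] unfolding H0_def by auto
  ultimately show ?thesis using G(2) by blast
qed

lemma exists_norming_functional:
  fixes x :: "'a::real_normed_vector"
  shows "\<exists>f::'a \<Rightarrow>\<^sub>L real. norm f \<le> 1 \<and> blinfun_apply f x = norm x"
proof (cases "x = 0")
  case True
  then show ?thesis by (intro exI[of _ 0]) simp
next
  case False
  then show ?thesis
    using exists_functional_separating_subspace[of "{0}" "norm x" x] by auto
qed

section \<open>Biorthogonal systems and Helly's theorem\<close>

definition biorthogonal :: "nat \<Rightarrow> (nat \<Rightarrow> 'a::real_normed_vector \<Rightarrow>\<^sub>L real) \<Rightarrow> (nat \<Rightarrow> 'a) \<Rightarrow> bool" where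
  "biorthogonal n fs us \<longleftrightarrow> (\<forall>i<n. \<forall>k<n. blinfun_apply (fs i) (us k) = (if i = k then 1 else 0))"

lemma biorthogonal_apply_sum:
  assumes "biorthogonal n fs us" "i < n"
  shows "blinfun_apply (fs i) (\<Sum>k<n. c k *\<^sub>R us k) = c i"
proof -
  have "blinfun_apply (fs i) (\<Sum>k<n. c k *\<^sub>R us k) = (\<Sum>k<n. c k * (if i = k then 1 else 0))"
    using assms unfolding biorthogonal_def
    by (auto simp: blinfun.bilinear_simps intro!: sum.cong)
  also have "\<dots> = c i"
    using assms(2) by (simp add: if_distrib[of "(*) _"] sum.delta' cong: if_cong)
  finally show ?thesis .
qed

lemma biorthogonal_sum_apply:
  assumes "biorthogonal n fs us" "k < n"
  shows "blinfun_apply (\<Sum>i<n. c i *\<^sub>R fs i) (us k) = c k"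
proof -
  have "blinfun_apply (\<Sum>i<n. c i *\<^sub>R fs i) (us k) = (\<Sum>i<n. c i * (if i = k then 1 else 0))"
    using assms unfolding biorthogonal_def
    by (auto simp: blinfun.bilinear_simps intro!: sum.cong)
  also have "\<dots> = c k"
    using assms(2) by (simp add: if_distrib[of "(*) _"] cong: if_cong)
  finally show ?thesis .
qed

text \<open>The \<open>xs m\<close> form a Cauchy sequence because the evaluation map into the bidual is isometric.\<close>
lemma bidual_evaluation_of_approximations:
  fixes \<Phi> :: "('a::banach \<Rightarrow>\<^sub>L real) \<Rightarrow>\<^sub>L real"
  assumes approx: "\<And>m f. \<bar>blinfun_apply \<Phi> f - blinfun_apply f (xs m)\<bar> \<le> inverse (real (Suc m)) * norm f"
  shows "\<exists>x. \<forall>f. blinfun_apply \<Phi> f = blinfun_apply f x"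
proof -
  have dist: "norm (xs m - xs n) \<le> inverse (real (Suc m)) + inverse (real (Suc n))" for m n
  proof -
    obtain g :: "'a \<Rightarrow>\<^sub>L real" where g: "norm g \<le> 1" "g (xs m - xs n) = norm (xs m - xs n)"
      using exists_norming_functional by blast
    have "norm (xs m - xs n) = (g (xs m) - \<Phi> g) + (\<Phi> g - g (xs n))"
      using g(2) by (simp add: blinfun.diff_right)
    also have "\<dots> \<le> inverse (real (Suc m)) * norm g + inverse (real (Suc n)) * norm g"
      using approx[where m = m and f = g] approx[where m = n and f = g] by (intro add_mono) auto
    also have "\<dots> \<le> inverse (real (Suc m)) + inverse (real (Suc n))"
      using g(1) by (intro add_mono) (auto intro: mult_left_le)
    finally show ?thesis .
  qed
  have "Cauchy xs"
  proof (rule CauchyI)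
    fix e :: real assume e: "e > 0"
    obtain M :: nat where M: "inverse (real (Suc M)) < e / 2"
      using e by (metis half_gt_zero_iff reals_Archimedean)
    have "norm (xs m - xs n) < e" if "m \<ge> M" "n \<ge> M" for m n
    proof -
      have "inverse (real (Suc m)) \<le> inverse (real (Suc M))" "inverse (real (Suc n)) \<le> inverse (real (Suc M))"
        using that by (simp_all add: field_simps)
      then show ?thesis using dist[of m n] M by linarith
    qed
    then show "\<exists>M. \<forall>m\<ge>M. \<forall>n\<ge>M. norm (xs m - xs n) < e" by blast
  qed
  then obtain x where x: "xs \<longlonglongrightarrow> x" using Cauchy_convergent_iff convergent_def by blast
  have "\<Phi> f = f x" for f
  proof -
    have "(\<lambda>m. \<Phi> f - f (xs m)) \<longlonglongrightarrow> \<Phi> f - f x"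
      by (intro tendsto_diff tendsto_const blinfun.tendsto[OF tendsto_const x])
    moreover have "(\<lambda>m. inverse (real (Suc m)) * norm f) \<longlonglongrightarrow> 0"
      by (rule tendsto_mult_left_zero[OF LIMSEQ_inverse_real_of_nat])
    then have "(\<lambda>m. \<Phi> f - f (xs m)) \<longlonglongrightarrow> 0"
      by (rule Lim_null_comparison[rotated]) (use approx in auto)
    ultimately show ?thesis using LIMSEQ_unique by fastforce
  qed
  then show ?thesis by blast
qed

lemma bidual_not_evaluation_uniformly_far:
  fixes \<Phi> :: "('a::banach \<Rightarrow>\<^sub>L real) \<Rightarrow>\<^sub>L real"
  assumes "\<forall>x. \<exists>f. blinfun_apply \<Phi> f \<noteq> blinfun_apply f x"
  shows "\<exists>d>0. \<forall>z. \<exists>f. \<bar>blinfun_apply \<Phi> f - blinfun_apply f z\<bar> > d * norm f"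
proof (rule ccontr)
  assume "\<not> ?thesis"
  then have "\<exists>z. \<forall>f. \<bar>\<Phi> f - f z\<bar> \<le> d * norm f" if "d > 0" for d
    using that by (force simp: not_less)
  then have "\<exists>z. \<forall>f. \<bar>\<Phi> f - f z\<bar> \<le> inverse (real (Suc m)) * norm f" for m
    by simp
  then obtain xs where "\<And>m f. \<bar>\<Phi> f - f (xs m)\<bar> \<le> inverse (real (Suc m)) * norm f"
    by metis
  then show False
    using bidual_evaluation_of_approximations assms by blast
qed

lemma subspace_common_kernel:
  "subspace {z. \<forall>i<n. blinfun_apply (fs i) z = 0}"
  unfolding subspace_def by (simp add: blinfun.bilinear_simps)

lemma biorthogonal_project_to_common_kernel:
  assumes "biorthogonal n fs us" "i < n"
  shows "blinfun_apply (fs i) (w - (\<Sum>k<n. blinfun_apply (fs k) w *\<^sub>R us k)) = 0"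
  using biorthogonal_apply_sum[OF assms] by (simp add: blinfun.diff_right)

text \<open>Otherwise \<open>\<Phi>\<close> is bounded by \<open>\<theta> * norm\<close> on the annihilator of the \<open>xs k\<close>. A
  Hahn--Banach extension \<open>\<Psi>\<close> of this restriction differs from \<open>\<Phi>\<close> by a functional vanishing on
  that subspace of finite codimension, i.e.\ by the evaluation at some \<open>z\<close>, so that \<open>\<Phi>\<close> would
  be within \<open>\<theta> < d\<close> of an evaluation.\<close>
lemma exists_functional_on_annihilator:
  fixes \<Phi> :: "('a::real_normed_vector \<Rightarrow>\<^sub>L real) \<Rightarrow>\<^sub>L real"
  assumes bio: "biorthogonal m hs xs"
    and far: "\<forall>z. \<exists>f. \<bar>blinfun_apply \<Phi> f - blinfun_apply f z\<bar> > d * norm f"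
    and \<theta>: "0 \<le> \<theta>" "\<theta> < d"
  shows "\<exists>f. norm f \<le> 1 \<and> (\<forall>k<m. blinfun_apply f (xs k) = 0) \<and> \<theta> < blinfun_apply \<Phi> f"
proof (rule ccontr)
  assume contra: "\<not> ?thesis"
  define Y where "Y = {f :: 'a \<Rightarrow>\<^sub>L real. \<forall>k<m. f (xs k) = 0}"
  have dominated: "\<Phi> f \<le> \<theta> * norm f" if "f \<in> Y" for f
  proof (cases "f = 0")
    case False
    define g where "g = (1 / norm f) *\<^sub>R f"
    have "norm g \<le> 1" "\<forall>k<m. g (xs k) = 0"
      using that False unfolding g_def Y_def by (simp_all add: blinfun.scaleR_left)
    then have "\<Phi> g \<le> \<theta>" using contra by (auto simp: not_less)
    then show ?thesis using False unfolding g_def by (simp add: blinfun.scaleR_right field_simps)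
  qed simp
  define H0 where "H0 = (\<lambda>f. (f, \<Phi> f)) ` Y"
  have "subspace H0"
    unfolding subspace_def H0_def Y_def
    by (auto simp: zero_prod_def blinfun.bilinear_simps image_iff
        intro!: exI[where x = "_ + _"] exI[where x = "_ *\<^sub>R _"])
  moreover have "single_valued H0" unfolding H0_def single_valued_def by auto
  ultimately obtain \<Psi> :: "('a \<Rightarrow>\<^sub>L real) \<Rightarrow>\<^sub>L real" where
    \<Psi>: "\<forall>f a. (f, a) \<in> H0 \<longrightarrow> \<Psi> f = a" "norm \<Psi> \<le> \<theta>"
    using Hahn_Banach_norm[OF \<theta>(1), of H0] dominated unfolding H0_def by blast
  define z where "z = (\<Sum>k<m. (\<Phi> (hs k) - \<Psi> (hs k)) *\<^sub>R xs k)"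
  have difference: "\<Phi> f - f z = \<Psi> f" for f
  proof -
    define g where "g = f - (\<Sum>k<m. f (xs k) *\<^sub>R hs k)"
    have "g \<in> Y"
      unfolding Y_def g_def using biorthogonal_sum_apply[OF bio] by (simp add: blinfun.diff_left)
    then have "\<Psi> g = \<Phi> g" using \<Psi>(1) unfolding H0_def by blast
    then show ?thesis
      unfolding g_def z_def
      by (simp add: blinfun.bilinear_simps algebra_simps sum_subtractf)
  qed
  obtain f where "\<bar>\<Phi> f - f z\<bar> > d * norm f" using far by blast
  moreover have "\<bar>\<Psi> f\<bar> \<le> \<theta> * norm f"
    using norm_blinfun[of \<Psi> f] mult_right_mono[OF \<Psi>(2) norm_ge_zero[of f]] by simp
  moreover have "\<theta> * norm f \<le> d * norm f" using \<theta> by (intro mult_right_mono) auto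
  ultimately show False using difference[of f] by simp
qed

text \<open>Otherwise a norm-one functional vanishing on the common kernel separates the solutions
  \<open>x0 - Z\<close> from the ball of radius \<open>r\<close>; it is a combination of the \<open>fs i\<close>, so \<open>\<Phi>\<close> maps
  it to \<open>r > norm \<Phi>\<close>.\<close>
theorem Helly_biorthogonal:
  fixes \<Phi> :: "('a::real_normed_vector \<Rightarrow>\<^sub>L real) \<Rightarrow>\<^sub>L real"
  assumes bio: "biorthogonal n fs us" and r: "norm \<Phi> < r"
  shows "\<exists>x. norm x < r \<and> (\<forall>i<n. blinfun_apply (fs i) x = blinfun_apply \<Phi> (fs i))"
proof -
  define x0 where "x0 = (\<Sum>k<n. \<Phi> (fs k) *\<^sub>R us k)"
  define Z where "Z = {z. \<forall>i<n. blinfun_apply (fs i) z = 0}"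
  have fs_x0: "fs i x0 = \<Phi> (fs i)" if "i < n" for i
    unfolding x0_def using biorthogonal_apply_sum[OF bio that] .
  show ?thesis
  proof (cases "\<exists>z\<in>Z. norm (x0 - z) < r")
    case True
    then obtain z where "z \<in> Z" "norm (x0 - z) < r" by blast
    then show ?thesis
      using fs_x0 unfolding Z_def by (intro exI[of _ "x0 - z"]) (simp add: blinfun.diff_right)
  next
    case False
    then have far: "\<And>z. z \<in> Z \<Longrightarrow> r \<le> norm (x0 - z)" by (auto simp: not_less)
    have "subspace Z" unfolding Z_def by (rule subspace_common_kernel)
    moreover have "0 < r" using r norm_ge_zero[of \<Phi>] by linarith
    ultimately obtain G :: "'a \<Rightarrow>\<^sub>L real" where G: "norm G \<le> 1" "\<forall>z\<in>Z. G z = 0" "G x0 = r"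
      using exists_functional_separating_subspace far by blast
    have G_expand: "G = (\<Sum>k<n. G (us k) *\<^sub>R fs k)"
    proof (rule blinfun_eqI)
      fix w
      have "w - (\<Sum>k<n. fs k w *\<^sub>R us k) \<in> Z"
        unfolding Z_def using biorthogonal_project_to_common_kernel[OF bio] by blast
      then have "G (w - (\<Sum>k<n. fs k w *\<^sub>R us k)) = 0" using G(2) by blast
      then show "G w = (\<Sum>k<n. G (us k) *\<^sub>R fs k) w"
        by (simp add: blinfun.bilinear_simps mult.commute)
    qed
    have "\<Phi> G = (\<Sum>k<n. G (us k) * \<Phi> (fs k))"
      by (subst G_expand) (simp add: blinfun.bilinear_simps)
    also have "\<dots> = G x0"
      unfolding x0_def by (simp add: blinfun.bilinear_simps mult.commute)
    finally have "\<Phi> G = r" using G(3) by simp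
    moreover have "\<Phi> G \<le> norm \<Phi>"
      using norm_blinfun[of \<Phi> G] G(1) mult_left_le[of "norm G" "norm \<Phi>"] by simp
    ultimately show ?thesis using r by simp
  qed
qed

section \<open>James' sequence in a nonreflexive space\<close>

definition triangular :: "real \<Rightarrow> nat \<Rightarrow> (nat \<Rightarrow> 'a::real_normed_vector \<Rightarrow>\<^sub>L real) \<Rightarrow> (nat \<Rightarrow> 'a) \<Rightarrow> bool" where
  "triangular \<theta> n fs xs \<longleftrightarrow> (\<forall>i<n. \<forall>k<n. blinfun_apply (fs i) (xs k) = (if i \<le> k then \<theta> else 0))"

lemma triangular_biorthogonal_functionals:
  assumes "triangular \<theta> n fs xs" "\<theta> \<noteq> 0"
  shows "biorthogonal n (\<lambda>i. (1 / \<theta>) *\<^sub>R (fs i - (if Suc i < n then fs (Suc i) else 0))) xs"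
  using assms unfolding biorthogonal_def triangular_def
  by (auto simp: blinfun.bilinear_simps)

lemma triangular_biorthogonal_vectors:
  assumes "triangular \<theta> n fs xs" "\<theta> \<noteq> 0"
  shows "biorthogonal n fs (\<lambda>k. (1 / \<theta>) *\<^sub>R (xs k - (if k = 0 then 0 else xs (k - 1))))"
  using assms unfolding biorthogonal_def triangular_def
  by (auto simp: blinfun.bilinear_simps)

lemma biorthogonal_extend:
  assumes bio: "biorthogonal n fs us" and f: "\<forall>k<n. blinfun_apply f (us k) = 0" "f \<noteq> 0"
  shows "\<exists>u. biorthogonal (Suc n) (fs(n := f)) (us(n := u))"
proof -
  obtain w where w: "f w \<noteq> 0" using f(2) blinfun_eqI[of f 0] by auto
  define u where "u = (1 / f w) *\<^sub>R (w - (\<Sum>k<n. fs k w *\<^sub>R us k))"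
  have "fs i u = 0" if "i < n" for i
    unfolding u_def using biorthogonal_project_to_common_kernel[OF bio that]
    by (simp add: blinfun.scaleR_right)
  moreover have "f u = 1"
    unfolding u_def using w f(1) by (simp add: blinfun.bilinear_simps)
  ultimately have "biorthogonal (Suc n) (fs(n := f)) (us(n := u))"
    using bio f(1) unfolding biorthogonal_def by (auto simp: less_Suc_eq)
  then show ?thesis ..
qed

lemma James_step:
  fixes \<Phi> :: "('a::real_normed_vector \<Rightarrow>\<^sub>L real) \<Rightarrow>\<^sub>L real"
  assumes far: "\<forall>z. \<exists>f. \<bar>blinfun_apply \<Phi> f - blinfun_apply f z\<bar> > d * norm f"
    and \<theta>: "0 < \<theta>" "\<theta> < d" and r: "norm \<Phi> < r"
    and \<Phi>_fs: "\<And>i. i < n \<Longrightarrow> blinfun_apply \<Phi> (fs i) = \<theta>"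
    and tri: "triangular \<theta> n fs xs"
  shows "\<exists>x f. norm x < r \<and> norm f \<le> 1 \<and> blinfun_apply \<Phi> f = \<theta> \<and>
    triangular \<theta> (Suc n) (fs(n := f)) (xs(n := x))"
proof -
  obtain f0 :: "'a \<Rightarrow>\<^sub>L real" where f0: "norm f0 \<le> 1" "\<forall>k<n. f0 (xs k) = 0" "\<theta> < \<Phi> f0"
    using exists_functional_on_annihilator[OF triangular_biorthogonal_functionals[OF tri] far, of \<theta>] \<theta>
    by auto
  define f where "f = (\<theta> / \<Phi> f0) *\<^sub>R f0"
  have f0_pos: "0 < \<Phi> f0" using f0(3) \<theta> by linarith
  have \<Phi>_f: "\<Phi> f = \<theta>" unfolding f_def using f0_pos by (simp add: blinfun.scaleR_right)
  have "norm f = (\<theta> / \<Phi> f0) * norm f0" unfolding f_def using f0_pos \<theta> by simp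
  also have "\<dots> \<le> 1"
    using f0(1,3) f0_pos \<theta> mult_le_one[of "\<theta> / \<Phi> f0" "norm f0"] by simp
  finally have norm_f: "norm f \<le> 1" .
  have f_xs: "\<forall>k<n. f (xs k) = 0" unfolding f_def using f0(2) by (simp add: blinfun.scaleR_left)
  define us where "us k = (1 / \<theta>) *\<^sub>R (xs k - (if k = 0 then 0 else xs (k - 1)))" for k
  have bio: "biorthogonal n fs us"
    unfolding us_def using triangular_biorthogonal_vectors[OF tri] \<theta> by simp
  have "\<forall>k<n. f (us k) = 0"
    unfolding us_def using f_xs by (simp add: blinfun.bilinear_simps)
  moreover have "f \<noteq> 0" using \<Phi>_f \<theta> by auto
  ultimately obtain u where "biorthogonal (Suc n) (fs(n := f)) (us(n := u))"
    using biorthogonal_extend[OF bio] by blast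
  from Helly_biorthogonal[OF this r]
  obtain x where x: "norm x < r" "\<forall>i<Suc n. (fs(n := f)) i x = \<Phi> ((fs(n := f)) i)"
    by blast
  have "fs i x = \<theta>" if "i < n" for i
    using x(2)[rule_format, of i] \<Phi>_fs[OF that] that by simp
  moreover have "f x = \<theta>" using x(2)[rule_format, of n] \<Phi>_f by simp
  ultimately have "triangular \<theta> (Suc n) (fs(n := f)) (xs(n := x))"
    using tri f_xs unfolding triangular_def by (auto simp: less_Suc_eq)
  then show ?thesis using x(1) norm_f \<Phi>_f by blast
qed

locale James_sequence =
  fixes \<theta> R :: real and x :: "nat \<Rightarrow> 'a::real_normed_vector" and f :: "nat \<Rightarrow> 'a \<Rightarrow>\<^sub>L real"
  assumes theta_pos: "0 < \<theta>"
    and norm_x_le: "\<And>k. norm (x k) \<le> R"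
    and norm_f_le: "\<And>n. norm (f n) \<le> 1"
    and f_x: "\<And>n k. blinfun_apply (f n) (x k) = (if n \<le> k then \<theta> else 0)"

lemma dependent_choice_sequence:
  assumes P0: "P 0 s0"
    and step: "\<And>n s. P n s \<Longrightarrow> \<exists>a. P (Suc n) (s(n := a))"
    and prefix: "\<And>n s t. (\<And>k. k < n \<Longrightarrow> s k = t k) \<Longrightarrow> P n s \<Longrightarrow> P n t"
  shows "\<exists>s. \<forall>n. P n s"
proof -
  obtain S where S: "\<And>n. P n (S n)" "\<And>n. \<exists>a. S (Suc n) = (S n)(n := a)"
    using dependent_nat_choice[of P "\<lambda>n s t. \<exists>a. t = s(n := a)"] P0 step by metis
  define s where "s k = S (Suc k) k" for k
  have stable: "s k = S m k" if "k < m" for k m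
    using that
  proof (induction m)
    case (Suc m)
    then show ?case using S(2)[of m] unfolding s_def by (cases "k = m") auto
  qed simp
  have "P n s" for n
  proof (rule prefix[OF _ S(1)])
    show "S n k = s k" if "k < n" for k using stable[OF that] by simp
  qed
  then show ?thesis by blast
qed

theorem nonreflexive_James_sequence:
  assumes "\<not> reflexive_space TYPE('a::banach)"
  shows "\<exists>\<theta> R (x :: nat \<Rightarrow> 'a) f. James_sequence \<theta> R x f"
proof -
  obtain \<Phi> :: "('a \<Rightarrow>\<^sub>L real) \<Rightarrow>\<^sub>L real" where "\<forall>x. \<exists>f. \<Phi> f \<noteq> f x"
    using assms unfolding reflexive_space_def by blast
  then obtain d where "d > 0" and far: "\<forall>z. \<exists>f. \<bar>\<Phi> f - f z\<bar> > d * norm f"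
    using bidual_not_evaluation_uniformly_far by blast
  define \<theta> where "\<theta> = d / 2"
  define r where "r = norm \<Phi> + 1"
  have \<theta>: "0 < \<theta>" "\<theta> < d" and r: "norm \<Phi> < r"
    using \<open>d > 0\<close> unfolding \<theta>_def r_def by auto
  define P where "P n s \<longleftrightarrow> (\<forall>k<n. norm (fst (s k)) < r \<and> norm (snd (s k)) \<le> 1 \<and> \<Phi> (snd (s k)) = \<theta>)
      \<and> triangular \<theta> n (snd \<circ> s) (fst \<circ> s)"
    for n and s :: "nat \<Rightarrow> 'a \<times> ('a \<Rightarrow>\<^sub>L real)"
  have "\<exists>s. \<forall>n. P n s"
  proof (rule dependent_choice_sequence)
    show "P 0 s" for s unfolding P_def triangular_def by simp
    show "\<exists>a. P (Suc n) (s(n := a))" if "P n s" for n s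
    proof -
      obtain x f where "norm x < r" "norm f \<le> 1" "\<Phi> f = \<theta>"
        "triangular \<theta> (Suc n) ((snd \<circ> s)(n := f)) ((fst \<circ> s)(n := x))"
        using James_step[OF far \<theta> r, of n "snd \<circ> s" "fst \<circ> s"] \<open>P n s\<close> unfolding P_def by auto
      then have "P (Suc n) (s(n := (x, f)))"
        using \<open>P n s\<close> unfolding P_def by (auto simp: less_Suc_eq fun_upd_comp)
      then show ?thesis ..
    qed
    show "P n t" if "\<And>k. k < n \<Longrightarrow> s k = t k" "P n s" for n s t
      using that unfolding P_def triangular_def by auto
  qed
  then obtain s where s: "\<And>n. P n s" by blast
  have "James_sequence \<theta> r (fst \<circ> s) (snd \<circ> s)"
  proof
    show "norm ((fst \<circ> s) k) \<le> r" for k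
      using s[of "Suc k"] unfolding P_def by (auto intro: less_imp_le)
    show "norm ((snd \<circ> s) n) \<le> 1" for n
      using s[of "Suc n"] unfolding P_def by auto
    show "(snd \<circ> s) n ((fst \<circ> s) k) = (if n \<le> k then \<theta> else 0)" for n k
      using s[of "Suc (max n k)"] unfolding P_def triangular_def by auto
  qed (rule \<theta>(1))
  then show ?thesis by blast
qed

section \<open>The convex set\<close>

lemma convex_linear_ge: "linear (L :: 'a::real_vector \<Rightarrow> real) \<Longrightarrow> convex {v. c \<le> L v}"
  using convex_linear_vimage[of L "{c..}"] by (simp add: vimage_def)

lemma convex_maxnorm_le: "convex {v :: 'a::real_normed_vector \<times> real. maxnorm v \<le> B}"
proof -
  have "{v :: 'a \<times> real. maxnorm v \<le> B} = fst -` cball 0 B \<inter> snd -` {-B..B}"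
    unfolding maxnorm_def by auto
  moreover have "linear (fst :: 'a \<times> real \<Rightarrow> 'a)" "linear (snd :: 'a \<times> real \<Rightarrow> real)"
    by (simp_all add: linearI)
  ultimately show ?thesis
    by (simp add: convex_Int convex_linear_vimage)
qed

lemma maxdist_nonneg: "C \<noteq> {} \<Longrightarrow> 0 \<le> maxdist p C"
  unfolding maxdist_def maxnorm_def by (rule cInf_greatest) auto

lemma maxdist_le: "c \<in> C \<Longrightarrow> maxdist p C \<le> maxnorm (p - c)"
  unfolding maxdist_def
  by (rule cInf_lower) (auto simp: bdd_below_def maxnorm_def intro!: exI[of _ 0])

lemma maxdist_lessD: "C \<noteq> {} \<Longrightarrow> maxdist p C < e \<Longrightarrow> \<exists>c\<in>C. maxnorm (p - c) < e"
  unfolding maxdist_def using cInf_lessD[of "(\<lambda>c. maxnorm (p - c)) ` C" e] by auto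

lemma maxdist_nonpos_imp_close:
  assumes "C \<noteq> {}" "maxdist (y, 0) C \<le> 0" "0 < \<eta>"
  shows "\<exists>c\<in>C. norm (y - fst c) < \<eta> \<and> \<bar>snd c\<bar> < \<eta>"
proof -
  have "maxdist (y, 0) C < \<eta>" using assms(2,3) by linarith
  then obtain c where "c \<in> C" "maxnorm ((y, 0) - c) < \<eta>"
    using maxdist_lessD[OF assms(1)] by blast
  then show ?thesis unfolding maxnorm_def by auto
qed

lemma Inf_eq_0_if_nonneg_arbitrarily_small:
  fixes S :: "real set"
  assumes "S \<noteq> {}" and nonneg: "\<And>s. s \<in> S \<Longrightarrow> 0 \<le> s" and small: "\<And>e. 0 < e \<Longrightarrow> \<exists>s\<in>S. s < e"
  shows "Inf S = 0"
proof (rule antisym)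
  show "0 \<le> Inf S" using assms(1) nonneg by (rule cInf_greatest)
  show "Inf S \<le> 0"
  proof (rule ccontr)
    assume "\<not> Inf S \<le> 0"
    then obtain s where "s \<in> S" "s < Inf S" using small[of "Inf S"] by auto
    moreover have "Inf S \<le> s"
      using \<open>s \<in> S\<close> nonneg by (intro cInf_lower) (auto simp: bdd_below_def)
    ultimately show False by simp
  qed
qed

definition weight :: "nat \<Rightarrow> real" where
  "weight j = 1 / real (Suc j)"

lemma weight_pos: "0 < weight j"
  unfolding weight_def by simp

lemma weight_le_1: "weight j \<le> 1"
  unfolding weight_def by simp

lemma weight_antimono: "j \<le> k \<Longrightarrow> weight k \<le> weight j"
  unfolding weight_def by (simp add: frac_le)

context James_sequence
begin

lemma R_nonneg: "0 \<le> R"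
  using norm_x_le[of 0] norm_ge_zero[of "x 0"] by linarith

lemma abs_f_le: "\<bar>f n z\<bar> \<le> norm z"
  using norm_blinfun[of "f n" z] mult_right_mono[OF norm_f_le[of n] norm_ge_zero[of z]] by simp

lemma f_le_add_norm_diff: "f n u \<le> f n v + norm (u - v)"
proof -
  have "f n u = f n v + f n (u - v)" by (simp add: blinfun.diff_right)
  then show ?thesis using abs_f_le[of n "u - v"] by linarith
qed

definition point :: "nat \<Rightarrow> nat \<Rightarrow> 'a \<times> real" where
  "point j k = ((1 - weight j) *\<^sub>R x j + weight j *\<^sub>R x k, weight k)"

definition James_set :: "('a \<times> real) set" where
  "James_set = convex hull {point j k | j k. j \<le> k}"

lemma f_point:
  "f n (fst (point j k)) = (1 - weight j) * (if n \<le> j then \<theta> else 0) + weight j * (if n \<le> k then \<theta> else 0)"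
  unfolding point_def by (simp add: blinfun.add_right blinfun.scaleR_right f_x)

lemma norm_fst_point_le: "norm (fst (point j k)) \<le> R"
proof -
  have "norm (fst (point j k)) \<le> norm ((1 - weight j) *\<^sub>R x j) + norm (weight j *\<^sub>R x k)"
    unfolding point_def fst_conv by (rule norm_triangle_ineq)
  also have "\<dots> = (1 - weight j) * norm (x j) + weight j * norm (x k)"
    using weight_pos[of j] weight_le_1[of j] by simp
  also have "\<dots> \<le> (1 - weight j) * R + weight j * R"
    using weight_pos[of j] weight_le_1[of j] norm_x_le
    by (intro add_mono mult_left_mono) auto
  finally show ?thesis by (simp add: algebra_simps)
qed

lemma maxbounded_James_set: "maxbounded James_set"
proof -
  have "maxnorm (point j k) \<le> R + 1" for j k
  proof -
    have "\<bar>snd (point j k)\<bar> \<le> 1" using weight_pos[of k] weight_le_1[of k] by (simp add: point_def)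
    then show ?thesis
      using norm_fst_point_le[of j k] R_nonneg unfolding maxnorm_def by simp
  qed
  then have "James_set \<subseteq> {v. maxnorm v \<le> R + 1}"
    unfolding James_set_def by (intro hull_minimal) (auto simp: convex_maxnorm_le)
  then show ?thesis unfolding maxbounded_def by blast
qed

lemma convex_eventually_annihilated: "convex {v :: 'a \<times> real. \<exists>K. \<forall>N\<ge>K. f N (fst v) = 0}"
proof (rule convexI)
  fix u v :: "'a \<times> real" and a b :: real
  assume "u \<in> {v. \<exists>K. \<forall>N\<ge>K. f N (fst v) = 0}" "v \<in> {v. \<exists>K. \<forall>N\<ge>K. f N (fst v) = 0}"
    and "0 \<le> a" "0 \<le> b" "a + b = 1"
  then obtain K L where "\<forall>N\<ge>K. f N (fst u) = 0" "\<forall>N\<ge>L. f N (fst v) = 0" by blast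
  then have "\<forall>N\<ge>max K L. f N (fst (a *\<^sub>R u + b *\<^sub>R v)) = 0"
    by (simp add: blinfun.add_right blinfun.scaleR_right)
  then show "a *\<^sub>R u + b *\<^sub>R v \<in> {v. \<exists>K. \<forall>N\<ge>K. f N (fst v) = 0}" by blast
qed

lemma James_set_eventually_annihilated:
  assumes "v \<in> James_set"
  shows "\<exists>K. \<forall>N\<ge>K. f N (fst v) = 0"
proof -
  have "point j k \<in> {v. \<exists>K. \<forall>N\<ge>K. f N (fst v) = 0}" if "j \<le> k" for j k
    using that by (auto simp: f_point intro!: exI[of _ "Suc k"])
  then have "{point j k | j k. j \<le> k} \<subseteq> {v. \<exists>K. \<forall>N\<ge>K. f N (fst v) = 0}"
    by blast
  from hull_minimal[where S = convex, OF this convex_eventually_annihilated]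
  show ?thesis using assms unfolding James_set_def by blast
qed

text \<open>\<open>\<theta>\<close> splits as \<open>\<theta> (1 - (n + 1) weight j) + (n + 1) \<theta> (weight j - N t) + (n + 1) \<theta> N t\<close>,
  and each of the first two pieces is bounded by the \<open>f n\<close>- resp.\ \<open>f N\<close>-term: either it is
  nonpositive or the functional takes its full value \<open>\<theta>\<close> at the relevant vectors.\<close>
lemma point_lower_bound:
  assumes "j \<le> k"
  shows "\<theta> \<le> f n (fst (point j k)) + (real n + 1) * f N (fst (point j k))
    + (real n + 1) * \<theta> * real N * snd (point j k)"
proof -
  let ?p = "point j k"
  have "\<theta> * (1 - (real n + 1) * weight j) \<le> f n (fst ?p)"
  proof (cases "n \<le> j")
    case True
    then show ?thesis
      using assms theta_pos weight_pos[of j] by (simp add: f_point algebra_simps)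
  next
    case False
    then have "1 \<le> (real n + 1) * weight j" by (simp add: weight_def field_simps)
    then have "\<theta> * (1 - (real n + 1) * weight j) \<le> 0"
      using theta_pos by (simp add: mult_nonneg_nonpos)
    also have "0 \<le> f n (fst ?p)"
      using theta_pos weight_pos[of j] weight_le_1[of j] by (simp add: f_point)
    finally show ?thesis .
  qed
  moreover have "\<theta> * (weight j - real N * snd ?p) \<le> f N (fst ?p)"
  proof (cases "N \<le> k")
    case True
    have "\<theta> * (weight j - real N * snd ?p) \<le> \<theta> * weight j"
      using theta_pos weight_pos[of k] by (simp add: point_def)
    also have "\<dots> \<le> f N (fst ?p)"
      using True theta_pos weight_pos[of j] weight_le_1[of j] by (simp add: f_point)
    finally show ?thesis .
  next
    case False
    then have "1 \<le> real N * snd ?p" by (simp add: point_def weight_def field_simps)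
    then have "\<theta> * (weight j - real N * snd ?p) \<le> 0"
      using theta_pos weight_le_1[of j] by (simp add: mult_nonneg_nonpos)
    also have "0 \<le> f N (fst ?p)"
      using theta_pos weight_pos[of j] weight_le_1[of j] by (simp add: f_point)
    finally show ?thesis .
  qed
  then have "(real n + 1) * (\<theta> * (weight j - real N * snd ?p)) \<le> (real n + 1) * f N (fst ?p)"
    by (intro mult_left_mono) auto
  ultimately show ?thesis by (simp add: algebra_simps)
qed

lemma James_set_lower_bound:
  assumes "v \<in> James_set"
  shows "\<theta> \<le> f n (fst v) + (real n + 1) * f N (fst v) + (real n + 1) * \<theta> * real N * snd v"
proof -
  define L where "L v = f n (fst v) + (real n + 1) * f N (fst v) + (real n + 1) * \<theta> * real N * snd v"
    for v :: "'a \<times> real"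
  have "linear L"
    unfolding L_def by (rule linearI) (auto simp: blinfun.add_right blinfun.scaleR_right algebra_simps)
  then have "James_set \<subseteq> {v. \<theta> \<le> L v}"
    unfolding James_set_def L_def
    by (intro hull_minimal) (auto simp: convex_linear_ge point_lower_bound)
  then show ?thesis using assms unfolding L_def by blast
qed

lemma convex_James_set: "convex James_set"
  unfolding James_set_def by (rule convex_convex_hull)

lemma James_set_nonempty: "James_set \<noteq> {}"
  using hull_subset[of "{point j k | j k. j \<le> k}" convex] unfolding James_set_def by blast

text \<open>Every point of \<open>James_set\<close> is annihilated by almost all \<open>f N\<close>, so near \<open>(y, 0)\<close> one
  finds \<open>n\<close> and then \<open>N\<close> with \<open>f n y\<close> and \<open>(n + 1) f N y\<close> small; for \<open>c\<close> close enough to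
  \<open>(y, 0)\<close> this contradicts \<open>James_set_lower_bound\<close>.\<close>
lemma maxdist_James_set_pos: "0 < maxdist (y, 0) James_set"
proof (rule ccontr)
  assume "\<not> 0 < maxdist (y, 0) James_set"
  then have close: "\<exists>c\<in>James_set. norm (y - fst c) < \<eta> \<and> \<bar>snd c\<bar> < \<eta>" if "0 < \<eta>" for \<eta>
    using maxdist_nonpos_imp_close[OF James_set_nonempty _ that] by simp
  have small: "\<exists>N. f N y < \<eta>" if \<eta>: "0 < \<eta>" for \<eta>
  proof -
    obtain c where c: "c \<in> James_set" "norm (y - fst c) < \<eta>" using close[OF \<eta>] by blast
    obtain K where "\<forall>N\<ge>K. f N (fst c) = 0" using James_set_eventually_annihilated[OF c(1)] by blast
    then have "f K y < \<eta>" using f_le_add_norm_diff[of K y "fst c"] c(2) by simp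
    then show ?thesis ..
  qed
  obtain n where n: "f n y < \<theta> / 4" using small[of "\<theta> / 4"] theta_pos by auto
  obtain N where N: "f N y < \<theta> / (8 * (real n + 1))"
    using small[of "\<theta> / (8 * (real n + 1))"] theta_pos by auto
  define D where "D = (real n + 2) * (1 + \<theta> * real N)"
  define \<eta> where "\<eta> = \<theta> / (2 * D)"
  have "0 < D" unfolding D_def using theta_pos by (simp add: add_pos_nonneg)
  then have \<eta>_pos: "0 < \<eta>" and budget: "(real n + 2) * (1 + \<theta> * real N) * \<eta> = \<theta> / 2"
    unfolding \<eta>_def using theta_pos by (simp_all flip: D_def)
  obtain c where c: "c \<in> James_set" "norm (y - fst c) < \<eta>" "\<bar>snd c\<bar> < \<eta>"
    using close[OF \<eta>_pos] by blast
  have near: "f m (fst c) < f m y + \<eta>" for m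
    using f_le_add_norm_diff[of m "fst c" y] norm_minus_commute[of "fst c" y] c(2) by linarith
  have "(real n + 1) * f N (fst c) \<le> (real n + 1) * (\<theta> / (8 * (real n + 1)) + \<eta>)"
    using near[of N] N by (intro mult_left_mono) auto
  also have "\<dots> = \<theta> / 8 + (real n + 1) * \<eta>" by (simp add: field_simps)
  finally have second: "(real n + 1) * f N (fst c) \<le> \<theta> / 8 + (real n + 1) * \<eta>" .
  have third: "(real n + 1) * \<theta> * real N * snd c \<le> (real n + 1) * \<theta> * real N * \<eta>"
    using c(3) theta_pos by (intro mult_left_mono) auto
  have "(real n + 1) * \<theta> * real N * \<eta> \<le> (real n + 2) * \<theta> * real N * \<eta>"
    using theta_pos \<eta>_pos by (intro mult_right_mono) auto
  then have "\<eta> + (real n + 1) * \<eta> + (real n + 1) * \<theta> * real N * \<eta> \<le> \<theta> / 2"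
    using budget by (simp add: algebra_simps)
  then show False
    using James_set_lower_bound[OF c(1), of n N] near[of n] n second third theta_pos by linarith
qed

lemma diameter_fst_points_le: "diameter ((\<lambda>k. fst (point j k)) ` K) \<le> weight j * (2 * R)"
proof (rule diameter_le)
  show "(\<lambda>k. fst (point j k)) ` K \<noteq> {} \<or> 0 \<le> weight j * (2 * R)"
    using weight_pos[of j] R_nonneg by simp
  fix a b assume "a \<in> (\<lambda>k. fst (point j k)) ` K" "b \<in> (\<lambda>k. fst (point j k)) ` K"
  then obtain k l where ab: "a = fst (point j k)" "b = fst (point j l)" by auto
  then have "a - b = weight j *\<^sub>R (x k - x l)"
    unfolding ab point_def by (simp add: algebra_simps)
  then have "norm (a - b) = weight j * norm (x k - x l)"
    using weight_pos[of j] by simp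
  also have "\<dots> \<le> weight j * (2 * R)"
    using weight_pos[of j] norm_triangle_ineq4[of "x k" "x l"] norm_x_le[of k] norm_x_le[of l]
    by (intro mult_left_mono) auto
  finally show "norm (a - b) \<le> weight j * (2 * R)" .
qed

lemma maxdist_fst_point_le:
  assumes "j \<le> k"
  shows "maxdist (fst (point j k), 0) James_set \<le> weight k"
proof -
  have "point j k \<in> James_set"
    unfolding James_set_def using assms by (intro hull_inc) blast
  then have "maxdist (fst (point j k), 0) James_set \<le> maxnorm ((fst (point j k), 0) - point j k)"
    by (rule maxdist_le)
  also have "\<dots> = weight k"
    using weight_pos[of k] unfolding maxnorm_def by (simp add: point_def)
  finally show ?thesis .
qed

lemma exists_small_set_near_James_set:
  assumes "0 < \<epsilon>"
  shows "\<exists>M. M \<noteq> {} \<and> bounded M \<and> diameter M < \<epsilon> \<and> Inf ((\<lambda>y. maxdist (y, 0) James_set) ` M) = 0"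
proof -
  obtain j :: nat where "2 * R / \<epsilon> < real j" using reals_Archimedean2 by blast
  then have j: "weight j * (2 * R) < \<epsilon>"
    using assms R_nonneg by (simp add: weight_def field_simps)
  define M where "M = (\<lambda>k. fst (point j k)) ` {j..}"
  have "M \<noteq> {}" unfolding M_def by auto
  moreover have "bounded M"
    unfolding M_def bounded_iff using norm_fst_point_le by blast
  moreover have "diameter M < \<epsilon>"
    unfolding M_def using diameter_fst_points_le j by (rule le_less_trans)
  moreover have "Inf ((\<lambda>y. maxdist (y, 0) James_set) ` M) = 0"
  proof (rule Inf_eq_0_if_nonneg_arbitrarily_small)
    show "(\<lambda>y. maxdist (y, 0) James_set) ` M \<noteq> {}" using \<open>M \<noteq> {}\<close> by simp
    show "0 \<le> s" if "s \<in> (\<lambda>y. maxdist (y, 0) James_set) ` M" for s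
      using that maxdist_nonneg[OF James_set_nonempty] by auto
    fix e :: real assume "0 < e"
    then obtain k :: nat where "inverse e < real k" using reals_Archimedean2 by blast
    then have "weight k < e"
      using \<open>0 < e\<close> by (simp add: weight_def field_simps)
    then have "weight (max j k) < e"
      using weight_antimono[of k "max j k"] by simp
    moreover have "maxdist (fst (point j (max j k)), 0) James_set \<le> weight (max j k)"
      by (rule maxdist_fst_point_le) simp
    moreover have "fst (point j (max j k)) \<in> M" unfolding M_def by simp
    ultimately show "\<exists>s\<in>(\<lambda>y. maxdist (y, 0) James_set) ` M. s < e" by force
  qed
  ultimately show ?thesis by blast
qed

end

theorem lemma2:
  assumes "\<not> reflexive_space TYPE('a::banach)"
  shows "\<exists>C :: ('a \<times> real) set. C \<noteq> {} \<and> maxbounded C \<and> convex C \<and>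
           (\<forall>x::'a. maxdist (x, 0) C > 0) \<and>
           (\<forall>\<epsilon>>0. \<exists>M :: 'a set. M \<noteq> {} \<and> bounded M \<and> diameter M < \<epsilon> \<and>
                 Inf ((\<lambda>x. maxdist (x, 0) C) ` M) = 0)"
proof -
  obtain \<theta> R and x :: "nat \<Rightarrow> 'a" and f where "James_sequence \<theta> R x f"
    using nonreflexive_James_sequence[OF assms] by blast
  then interpret James_sequence \<theta> R x f .
  show ?thesis
    using James_set_nonempty maxbounded_James_set convex_James_set maxdist_James_set_pos
      exists_small_set_near_James_set
    by (intro exI[of _ James_set]) blast
qed

end
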